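(* The transfinite sequence $\langle (T_\alpha,P_\alpha)\rangle_{\alpha\in\mathrm{On}}$ defined by $(T_0,P_0)=((\emptyset,\emptyset),(\emptyset,\emptyset))$, $(T_{\beta+1},P_{\beta+1})=\Gamma_{\mathscr{TP}}(T_\beta,P_\beta)$ and $(T_\lambda,P_\lambda)=\bigcup_{\beta<\lambda}(T_\beta,P_\beta)$ for limit $\lambda$ reaches a fixed point, i.e. a pair $(T_\infty,P_\infty)$ in the sequence with $\Gamma_{\mathscr{TP}}(T_\infty,P_\infty)=(T_\infty,P_\infty)$; moreover $(T_\infty,P_\infty)$ is the least fixed point of $\Gamma_{\mathscr{TP}}$ with respect to the componentwise inclusion order.
   Context: Language. Let $\mathcal L_{\mathbb N}$ be the language of first-order Peano arithmetic and $\mathcal L=\mathcal L_{\mathbb N}\cup\{\mathrm T,\mathrm P\}$ with unary predicates $\mathrm T,\mathrm P$. $\mathcal L$-formulas are in Tait style: literals are $s=t$, $s\neq t$, $\mathrm Tt$, $\neg\mathrm Tt$, $\mathrm Pt$, $\neg\mathrm Pt$; formulas are built from literals by $\wedge,\vee,\forall,\exists$; negation of an arbitrary formula is defined by De Morgan dualities with $\neg\neg\varphi:=\varphi$. A standard Gödel numbering is fixed; $\#e$ is the code of $e$, $\ulcorner e\urcorner$ the numeral of $\#e$, $\mathrm{val}(t)$ the value of a closed term $t$, $\dot\neg$ the primitive recursive function with $\dot\neg(\#\varphi)=\#\neg\varphi$; $\mathrm T\varphi,\mathrm P\varphi$ abbreviate $\mathrm T\ulcorner\varphi\urcorner,\mathrm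 P\ulcorner\varphi\urcorner$. Semantics. A partial model is $(\mathbb N,T,P)$ with $\mathbb N$ the standard model and $T=(T^+,T^-)$, $P=(P^+,P^-)$ pairs of subsets of $\omega$. Strong Kleene satisfaction $\models_{SK}$: arithmetic literals evaluated in $\mathbb N$; $\mathrm Tt$ satisfied iff $\mathrm{val}(t)\in T^+$, $\neg\mathrm Tt$ iff $\mathrm{val}(t)\in T^-$, likewise for $\mathrm P$ with $P^\pm$; conjunction iff both, disjunction iff at least one, $\forall x\varphi(x)$ iff all numeral instances, $\exists x\varphi(x)$ iff some numeral instance. Base paradoxicality. $\mathrm{PA}[\mathrm{SK}]$ is the two-sided sequent calculus for Strong Kleene logic with identity in $\mathcal L$ (initial sequents $\varphi\Rightarrow\varphi$, cut, weakening, the rule from $\Gamma\Rightarrow\Delta,\varphi$ infer $\neg\varphi,\Gamma\Rightarrow\Delta$, usual rules for $\wedge,\vee,\forall,\exists$, reflexivity $\Rightarrow t=t$, replacement from $\Gamma\Rightarrow\Delta,\varphi(t)$ infer $\Gamma\Rightarrow\Delta,s\neq t,\varphi(s)$) plus the initial sequents of Peano arithmetic and the induction rule for all $\mathcal L$-formulas. A sentence $\varphi$ is base paradoxical iff $\mathrm{PA}[\mathrm{SK}]$ derives $\varphi\Leftrightarrow\neg\mathrm T\varphi$ and $\neg\varphi\Leftrightarrow\mathrm T\varphi$ (where $\Leftrightarrow$ denotes derivability of both sequents). $B(x)$ is an $\mathcal L_{\mathbb N}$-formula defining in $\mathbb N$ the set of codes of base paradoxical sentences, and $\Pi(x):=B(x)\vee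 B(\dot\neg x)$. Jump. Let $\mathscr P(x)$ be the $\mathcal L$-formula which is the disjunction of: (1) $x$ codes a sentence and $\Pi(x)$; (2) $x$ codes a sentence $\mathrm Tt$ ($t$ a closed term) and $\mathrm P(\mathrm{val}(t))$; (3) $x$ codes a sentence $\neg\mathrm Tt$ and $\mathrm P(\mathrm{val}(t))$; (4) $x$ codes a sentence $\psi\wedge\theta$ and $(\mathrm P\psi\wedge\mathrm P\theta)\vee(\mathrm T\psi\wedge\mathrm P\theta)\vee(\mathrm T\theta\wedge\mathrm P\psi)$; (5) $x$ codes a sentence $\psi\vee\theta$ and $(\mathrm P\psi\wedge\mathrm P\theta)\vee(\neg\mathrm T\psi\wedge\mathrm P\theta)\vee(\neg\mathrm T\theta\wedge\mathrm P\psi)$; (6) $x$ codes a sentence $\forall v\psi$ and $\exists y\,\mathrm P\psi(\dot y)\wedge\forall y(\mathrm P\psi(\dot y)\vee\mathrm T\psi(\dot y))$; (7) $x$ codes a sentence $\exists v\psi$ and $\exists y\,\mathrm P\psi(\dot y)\wedge\forall y(\mathrm P\psi(\dot y)\vee\neg\mathrm T\psi(\dot y))$; here $\psi(\dot y)$ is the code of the result of substituting the numeral of $y$ for $v$. Write $\mathscr P(\varphi)$ for $\mathscr P(\ulcorner\varphi\urcorner)$. Define $\Gamma_{\mathscr{TP}}(T,P)=\big((\{\#\varphi:(\mathbb N,T,P)\models_{SK}\varphi\},\{\#\varphi:(\mathbb N,T,P)\models_{SK}\neg\varphi\}),(\{\#\varphi:(\mathbb N,T,P)\models_{SK}\mathscr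 P(\varphi)\},\{\#\varphi:(\mathbb N,T,P)\models_{SK}\varphi\vee\neg\varphi\})\big)$, $\varphi$ ranging over $\mathcal L$-sentences. Order: $(X,Y)\le(X',Y')$ iff $X\subseteq X'$ and $Y\subseteq Y'$; $(T,P)\le(T',P')$ iff $T\le T'$ and $P\le P'$; unions are componentwise. *)

theory Defs
  imports Main "HOL-Library.Nat_Bijection" "HOL-Library.Product_Order"
begin

text \<open>Terms of arithmetic: free variables FV, bound variables BV (de Bruijn
 indices referring to enclosing quantifiers), 0, successor, +, *.\<close>
datatype trm = FV nat | BV nat | Zero | Sc trm | Pl trm trm | Tm trm trm

text \<open>Formulas in Tait style: literals, conjunction, disjunction, quantifiers.
 Quantifiers bind BV 0 in their body.\<close>
datatype form =
    Eq trm trm | Neq trm trm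
  | Tr trm | NTr trm | Pr trm | NPr trm
  | And form form | Or form form
  | All form | Ex form

fun neg :: "form \<Rightarrow> form" where
  "neg (Eq s t) = Neq s t"
| "neg (Neq s t) = Eq s t"
| "neg (Tr t) = NTr t"
| "neg (NTr t) = Tr t"
| "neg (Pr t) = NPr t"
| "neg (NPr t) = Pr t"
| "neg (And a b) = Or (neg a) (neg b)"
| "neg (Or a b) = And (neg a) (neg b)"
| "neg (All a) = Ex (neg a)"
| "neg (Ex a) = All (neg a)"

fun inst_trm :: "nat \<Rightarrow> trm \<Rightarrow> trm \<Rightarrow> trm" where
  "inst_trm k u (FV n) = FV n"
| "inst_trm k u (BV n) = (if n = k then u else BV n)"
| "inst_trm k u Zero = Zero"
| "inst_trm k u (Sc t) = Sc (inst_trm k u t)"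
| "inst_trm k u (Pl s t) = Pl (inst_trm k u s) (inst_trm k u t)"
| "inst_trm k u (Tm s t) = Tm (inst_trm k u s) (inst_trm k u t)"

fun inst_at :: "nat \<Rightarrow> trm \<Rightarrow> form \<Rightarrow> form" where
  "inst_at k u (Eq s t) = Eq (inst_trm k u s) (inst_trm k u t)"
| "inst_at k u (Neq s t) = Neq (inst_trm k u s) (inst_trm k u t)"
| "inst_at k u (Tr t) = Tr (inst_trm k u t)"
| "inst_at k u (NTr t) = NTr (inst_trm k u t)"
| "inst_at k u (Pr t) = Pr (inst_trm k u t)"
| "inst_at k u (NPr t) = NPr (inst_trm k u t)"
| "inst_at k u (And a b) = And (inst_at k u a) (inst_at k u b)"
| "inst_at k u (Or a b) = Or (inst_at k u a) (inst_at k u b)"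
| "inst_at k u (All a) = All (inst_at (Suc k) u a)"
| "inst_at k u (Ex a) = Ex (inst_at (Suc k) u a)"

abbreviation inst :: "trm \<Rightarrow> form \<Rightarrow> form" where
  "inst u a \<equiv> inst_at 0 u a"

text \<open>Local closedness: every bound variable is bound (k = number of enclosing binders).\<close>
fun lc_trm :: "nat \<Rightarrow> trm \<Rightarrow> bool" where
  "lc_trm k (FV n) = True"
| "lc_trm k (BV n) = (n < k)"
| "lc_trm k Zero = True"
| "lc_trm k (Sc t) = lc_trm k t"
| "lc_trm k (Pl s t) = (lc_trm k s \<and> lc_trm k t)"
| "lc_trm k (Tm s t) = (lc_trm k s \<and> lc_trm k t)"

fun lc_form :: "nat \<Rightarrow> form \<Rightarrow> bool" where
  "lc_form k (Eq s t) = (lc_trm k s \<and> lc_trm k t)"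
| "lc_form k (Neq s t) = (lc_trm k s \<and> lc_trm k t)"
| "lc_form k (Tr t) = lc_trm k t"
| "lc_form k (NTr t) = lc_trm k t"
| "lc_form k (Pr t) = lc_trm k t"
| "lc_form k (NPr t) = lc_trm k t"
| "lc_form k (And a b) = (lc_form k a \<and> lc_form k b)"
| "lc_form k (Or a b) = (lc_form k a \<and> lc_form k b)"
| "lc_form k (All a) = lc_form (Suc k) a"
| "lc_form k (Ex a) = lc_form (Suc k) a"

fun fv_trm :: "trm \<Rightarrow> nat set" where
  "fv_trm (FV n) = {n}"
| "fv_trm (BV n) = {}"
| "fv_trm Zero = {}"
| "fv_trm (Sc t) = fv_trm t"
| "fv_trm (Pl s t) = fv_trm s \<union> fv_trm t"
| "fv_trm (Tm s t) = fv_trm s \<union> fv_trm t"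

fun fv_form :: "form \<Rightarrow> nat set" where
  "fv_form (Eq s t) = fv_trm s \<union> fv_trm t"
| "fv_form (Neq s t) = fv_trm s \<union> fv_trm t"
| "fv_form (Tr t) = fv_trm t"
| "fv_form (NTr t) = fv_trm t"
| "fv_form (Pr t) = fv_trm t"
| "fv_form (NPr t) = fv_trm t"
| "fv_form (And a b) = fv_form a \<union> fv_form b"
| "fv_form (Or a b) = fv_form a \<union> fv_form b"
| "fv_form (All a) = fv_form a"
| "fv_form (Ex a) = fv_form a"

definition closed_trm :: "trm \<Rightarrow> bool" where
  "closed_trm t \<longleftrightarrow> lc_trm 0 t \<and> fv_trm t = {}"

definition sentence :: "form \<Rightarrow> bool" where
  "sentence a \<longleftrightarrow> lc_form 0 a \<and> fv_form a = {}"

fun val :: "trm \<Rightarrow> nat" where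
  "val (FV n) = 0"
| "val (BV n) = 0"
| "val Zero = 0"
| "val (Sc t) = Suc (val t)"
| "val (Pl s t) = val s + val t"
| "val (Tm s t) = val s * val t"

fun num :: "nat \<Rightarrow> trm" where
  "num 0 = Zero"
| "num (Suc n) = Sc (num n)"

fun code_trm :: "trm \<Rightarrow> nat" where
  "code_trm (FV n) = prod_encode (0, n)"
| "code_trm (BV n) = prod_encode (1, n)"
| "code_trm Zero = prod_encode (2, 0)"
| "code_trm (Sc t) = prod_encode (3, code_trm t)"
| "code_trm (Pl s t) = prod_encode (4, prod_encode (code_trm s, code_trm t))"
| "code_trm (Tm s t) = prod_encode (5, prod_encode (code_trm s, code_trm t))"

fun code :: "form \<Rightarrow> nat" where
  "code (Eq s t) = prod_encode (0, prod_encode (code_trm s, code_trm t))"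
| "code (Neq s t) = prod_encode (1, prod_encode (code_trm s, code_trm t))"
| "code (Tr t) = prod_encode (2, code_trm t)"
| "code (NTr t) = prod_encode (3, code_trm t)"
| "code (Pr t) = prod_encode (4, code_trm t)"
| "code (NPr t) = prod_encode (5, code_trm t)"
| "code (And a b) = prod_encode (6, prod_encode (code a, code b))"
| "code (Or a b) = prod_encode (7, prod_encode (code a, code b))"
| "code (All a) = prod_encode (8, code a)"
| "code (Ex a) = prod_encode (9, code a)"

definition gn :: "form \<Rightarrow> trm" where
  "gn a = num (code a)"

text \<open>Sequents Gamma => Delta with finite sets of formulas (exchange and
 contraction are implicit).\<close>
inductive PASK :: "form set \<Rightarrow> form set \<Rightarrow> bool" where
  init: "PASK {a} {a}"
| cut: "PASK G (insert a D) \<Longrightarrow> PASK (insert a G) D \<Longrightarrow> PASK G D"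
| weak: "PASK G D \<Longrightarrow> finite G' \<Longrightarrow> finite D' \<Longrightarrow> PASK (G \<union> G') (D \<union> D')"
| negL: "PASK G (insert a D) \<Longrightarrow> PASK (insert (neg a) G) D"
| andL1: "PASK (insert a G) D \<Longrightarrow> PASK (insert (And a b) G) D"
| andL2: "PASK (insert b G) D \<Longrightarrow> PASK (insert (And a b) G) D"
| andR: "PASK G (insert a D) \<Longrightarrow> PASK G (insert b D) \<Longrightarrow> PASK G (insert (And a b) D)"
| orL: "PASK (insert a G) D \<Longrightarrow> PASK (insert b G) D \<Longrightarrow> PASK (insert (Or a b) G) D"
| orR1: "PASK G (insert a D) \<Longrightarrow> PASK G (insert (Or a b) D)"
| orR2: "PASK G (insert b D) \<Longrightarrow> PASK G (insert (Or a b) D)"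
| allL: "lc_trm 0 t \<Longrightarrow> PASK (insert (inst t a) G) D \<Longrightarrow> PASK (insert (All a) G) D"
| allR: "x \<notin> fv_form a \<Longrightarrow> x \<notin> \<Union>(fv_form ` G) \<Longrightarrow> x \<notin> \<Union>(fv_form ` D) \<Longrightarrow>
         PASK G (insert (inst (FV x) a) D) \<Longrightarrow> PASK G (insert (All a) D)"
| exL: "x \<notin> fv_form a \<Longrightarrow> x \<notin> \<Union>(fv_form ` G) \<Longrightarrow> x \<notin> \<Union>(fv_form ` D) \<Longrightarrow>
         PASK (insert (inst (FV x) a) G) D \<Longrightarrow> PASK (insert (Ex a) G) D"
| exR: "lc_trm 0 t \<Longrightarrow> PASK G (insert (inst t a) D) \<Longrightarrow> PASK G (insert (Ex a) D)"
| refl: "lc_trm 0 t \<Longrightarrow> PASK {} {Eq t t}"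
| repl: "lc_trm 0 s \<Longrightarrow> lc_trm 0 t \<Longrightarrow> PASK G (insert (inst t a) D) \<Longrightarrow>
         PASK G (insert (Neq s t) (insert (inst s a) D))"
| pa1: "lc_trm 0 t \<Longrightarrow> PASK {} {Neq (Sc t) Zero}"
| pa2: "lc_trm 0 s \<Longrightarrow> lc_trm 0 t \<Longrightarrow> PASK {Eq (Sc s) (Sc t)} {Eq s t}"
| pa3: "lc_trm 0 s \<Longrightarrow> PASK {} {Eq (Pl s Zero) s}"
| pa4: "lc_trm 0 s \<Longrightarrow> lc_trm 0 t \<Longrightarrow> PASK {} {Eq (Pl s (Sc t)) (Sc (Pl s t))}"
| pa5: "lc_trm 0 s \<Longrightarrow> PASK {} {Eq (Tm s Zero) Zero}"
| pa6: "lc_trm 0 s \<Longrightarrow> lc_trm 0 t \<Longrightarrow> PASK {} {Eq (Tm s (Sc t)) (Pl (Tm s t) s)}"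
| ind: "x \<notin> fv_form a \<Longrightarrow> x \<notin> \<Union>(fv_form ` G) \<Longrightarrow> x \<notin> \<Union>(fv_form ` D) \<Longrightarrow> lc_trm 0 t \<Longrightarrow>
        PASK (insert (inst (FV x) a) G) (insert (inst (Sc (FV x)) a) D) \<Longrightarrow>
        PASK (insert (inst Zero a) G) (insert (inst t a) D)"

definition PASK_iff :: "form \<Rightarrow> form \<Rightarrow> bool" where
  "PASK_iff a b \<longleftrightarrow> PASK {a} {b} \<and> PASK {b} {a}"

definition base_paradoxical :: "form \<Rightarrow> bool" where
  "base_paradoxical a \<longleftrightarrow> sentence a \<and>
     PASK_iff a (neg (Tr (gn a))) \<and> PASK_iff (neg a) (Tr (gn a))"

definition Pi_set :: "nat set" where
  "Pi_set = {code a | a. sentence a \<and> (base_paradoxical a \<or> base_paradoxical (neg a))}"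

type_synonym pmodel = "(nat set \<times> nat set) \<times> (nat set \<times> nat set)"

fun fsize :: "form \<Rightarrow> nat" where
  "fsize (And a b) = Suc (fsize a + fsize b)"
| "fsize (Or a b) = Suc (fsize a + fsize b)"
| "fsize (All a) = Suc (fsize a)"
| "fsize (Ex a) = Suc (fsize a)"
| "fsize _ = 0"

lemma fsize_inst_at[simp]: "fsize (inst_at k u a) = fsize a"
  by (induction a arbitrary: k) auto

text \<open>M = ((T+, T-), (P+, P-)).  Quantifiers via numeral instances.\<close>
function SK :: "pmodel \<Rightarrow> form \<Rightarrow> bool" where
  "SK M (Eq s t) = (val s = val t)"
| "SK M (Neq s t) = (val s \<noteq> val t)"
| "SK M (Tr t) = (val t \<in> fst (fst M))"
| "SK M (NTr t) = (val t \<in> snd (fst M))"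
| "SK M (Pr t) = (val t \<in> fst (snd M))"
| "SK M (NPr t) = (val t \<in> snd (snd M))"
| "SK M (And a b) = (SK M a \<and> SK M b)"
| "SK M (Or a b) = (SK M a \<or> SK M b)"
| "SK M (All a) = (\<forall>n. SK M (inst (num n) a))"
| "SK M (Ex a) = (\<exists>n. SK M (inst (num n) a))"
  by pat_completeness auto
termination by (relation "measure (\<lambda>(M, a). fsize a)") auto

text \<open>Strong Kleene satisfaction of the L-formula script-P applied to the
 numeral of the code of the sentence phi, written out disjunct by disjunct.\<close>
definition SK_P :: "pmodel \<Rightarrow> form \<Rightarrow> bool" where
  "SK_P M a \<longleftrightarrow>
    (let Tp = fst (fst M); Tn = snd (fst M); Pp = fst (snd M) in
      (code a \<in> Pi_set)
    \<or> (\<exists>t. closed_trm t \<and> a = Tr t \<and> val t \<in> Pp)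
    \<or> (\<exists>t. closed_trm t \<and> a = NTr t \<and> val t \<in> Pp)
    \<or> (\<exists>b c. a = And b c \<and>
          ((code b \<in> Pp \<and> code c \<in> Pp) \<or> (code b \<in> Tp \<and> code c \<in> Pp) \<or> (code c \<in> Tp \<and> code b \<in> Pp)))
    \<or> (\<exists>b c. a = Or b c \<and>
          ((code b \<in> Pp \<and> code c \<in> Pp) \<or> (code b \<in> Tn \<and> code c \<in> Pp) \<or> (code c \<in> Tn \<and> code b \<in> Pp)))
    \<or> (\<exists>b. a = All b \<and> (\<exists>y. code (inst (num y) b) \<in> Pp) \<and>
          (\<forall>y. code (inst (num y) b) \<in> Pp \<or> code (inst (num y) b) \<in> Tp))
    \<or> (\<exists>b. a = Ex b \<and> (\<exists>y. code (inst (num y) b) \<in> Pp) \<and>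
          (\<forall>y. code (inst (num y) b) \<in> Pp \<or> code (inst (num y) b) \<in> Tn)))"

definition Gamma_TP :: "pmodel \<Rightarrow> pmodel" where
  "Gamma_TP M =
    (({code a | a. sentence a \<and> SK M a}, {code a | a. sentence a \<and> SK M (neg a)}),
     ({code a | a. sentence a \<and> SK_P M a}, {code a | a. sentence a \<and> SK M (Or a (neg a))}))"

text \<open>The stages (T_alpha, P_alpha) of the transfinite sequence: the empty start,
 closure under successor steps, and unions (componentwise suprema) at limits,
 a limit stage being the union of a chain of earlier stages.\<close>
inductive_set TP_stages :: "pmodel set" where
  zero: "(({}, {}), ({}, {})) \<in> TP_stages"
| succ: "x \<in> TP_stages \<Longrightarrow> Gamma_TP x \<in> TP_stages"
| lim: "Complete_Partial_Order.chain (\<le>) C \<Longrightarrow> \<forall>c\<in>C. c \<in> TP_stages \<Longrightarrow> Sup C \<in> TP_stages"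

end

theory Submission
  imports Defs
begin

text \<open>Strong Kleene satisfaction and every clause of the jump formula are positive in
  \<open>T\<^sup>+\<close>, \<open>T\<^sup>-\<close> and \<open>P\<^sup>+\<close> (and \<open>P\<^sup>-\<close> is never consulted), so \<open>Gamma_TP\<close> is monotone on the
  complete lattice of partial models. The transfinite iteration of a monotone map from the
  bottom element then reaches its least fixed point, and every iterate is a stage of the
  sequence.\<close>

lemma SK_mono: "SK M a \<Longrightarrow> M \<le> M' \<Longrightarrow> SK M' a"
  by (induction M a rule: SK.induct) (auto simp: less_eq_prod_def)

lemma SK_P_mono: "SK_P M a \<Longrightarrow> M \<le> M' \<Longrightarrow> SK_P M' a"
  unfolding SK_P_def Let_def less_eq_prod_def by (elim disjE exE conjE; simp; meson subsetD)

lemma mono_Gamma_TP: "mono Gamma_TP"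
proof (rule monoI)
  fix M M' :: pmodel
  assume le: "M \<le> M'"
  show "Gamma_TP M \<le> Gamma_TP M'"
    using SK_mono[OF _ le] SK_P_mono[OF _ le]
    unfolding Gamma_TP_def less_eq_prod_def by auto
qed

lemma iterates_Gamma_TP_subset_TP_stages: "ccpo_class.iterates Gamma_TP \<subseteq> TP_stages"
proof
  fix x
  assume "x \<in> ccpo_class.iterates Gamma_TP"
  then show "x \<in> TP_stages"
    by (induction x rule: ccpo_class.iterates.induct) (auto intro: TP_stages.intros)
qed

theorem mainTheorem2:
  shows "\<exists>x \<in> TP_stages. Gamma_TP x = x \<and> (\<forall>y. Gamma_TP y = y \<longrightarrow> x \<le> y)"
proof (intro bexI conjI allI impI)
  show "ccpo_class.fixp Gamma_TP \<in> TP_stages"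
    using iterates_fixp[OF mono_Gamma_TP] iterates_Gamma_TP_subset_TP_stages by blast
  show "Gamma_TP (ccpo_class.fixp Gamma_TP) = ccpo_class.fixp Gamma_TP"
    using fixp_unfold[OF mono_Gamma_TP] by simp
  fix y
  assume "Gamma_TP y = y"
  then show "ccpo_class.fixp Gamma_TP \<le> y"
    by (intro fixp_lowerbound[OF mono_Gamma_TP]) simp
qed

end
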